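(* Let $\mathcal{P}$ be the set of paths of a $B_k$-EPG representation of a graph $G$ and let $P_1,P_2\in\mathcal{P}$. Then $P_1$ and $P_2$ edge-intersect if and only if $P_1\cap P_2$ contains at least one edge that is a relevant edge of $P_1$ or of $P_2$.
   Context: A grid is the set of integer points of the plane; a grid edge joins two grid points at distance $1$. A path in the grid is a sequence of distinct grid edges in which consecutive edges share exactly one grid point and non-consecutive edges share none; a bend is a pair of consecutive edges with different directions (horizontal/vertical), these being called bend edges. The first and last edges of a path are its extremity edges; the relevant edges of a path are its extremity edges and bend edges. Two paths edge-intersect if they share a grid edge. An EPG representation of $G$ is a family $(P_v)_{v\in V(G)}$ of grid paths such that distinct $u,v$ are adjacent iff $P_u,P_v$ share a grid edge; it is $B_k$-EPG if every path has at most $k$ bends. *)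

theory Defs
  imports Main
begin

type_synonym gpoint = "int \<times> int"
type_synonym gedge = "gpoint set"

definition grid_edge :: "gedge \<Rightarrow> bool" where
  "grid_edge e \<longleftrightarrow> (\<exists>a b. e = {(a, b), (a + 1, b)} \<or> e = {(a, b), (a, b + 1)})"

definition horizontal :: "gedge \<Rightarrow> bool" where
  "horizontal e \<longleftrightarrow> (\<exists>a b. e = {(a, b), (a + 1, b)})"

definition grid_path :: "gedge list \<Rightarrow> bool" where
  "grid_path es \<longleftrightarrow> es \<noteq> [] \<and> distinct es \<and> (\<forall>e\<in>set es. grid_edge e) \<and>
     (\<forall>i. Suc i < length es \<longrightarrow> card (es ! i \<inter> es ! Suc i) = 1) \<and>
     (\<forall>i j. i < length es \<and> j < length es \<and> Suc i < j \<longrightarrow> es ! i \<inter> es ! j = {})"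

definition bend_at :: "gedge list \<Rightarrow> nat \<Rightarrow> bool" where
  "bend_at es i \<longleftrightarrow> Suc i < length es \<and> (horizontal (es ! i) \<noteq> horizontal (es ! Suc i))"

definition num_bends :: "gedge list \<Rightarrow> nat" where
  "num_bends es = card {i. bend_at es i}"

definition bend_edges :: "gedge list \<Rightarrow> gedge set" where
  "bend_edges es = {es ! i | i. bend_at es i} \<union> {es ! Suc i | i. bend_at es i}"

definition extremity_edges :: "gedge list \<Rightarrow> gedge set" where
  "extremity_edges es = {hd es, last es}"

definition relevant_edges :: "gedge list \<Rightarrow> gedge set" where
  "relevant_edges es = extremity_edges es \<union> bend_edges es"

definition edge_intersect :: "gedge list \<Rightarrow> gedge list \<Rightarrow> bool" where
  "edge_intersect P Q \<longleftrightarrow> set P \<inter> set Q \<noteq> {}"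

definition simple_graph :: "'v set \<Rightarrow> ('v \<Rightarrow> 'v \<Rightarrow> bool) \<Rightarrow> bool" where
  "simple_graph V E \<longleftrightarrow> (\<forall>u v. E u v \<longrightarrow> u \<in> V \<and> v \<in> V \<and> u \<noteq> v \<and> E v u)"

definition EPG_rep :: "'v set \<Rightarrow> ('v \<Rightarrow> 'v \<Rightarrow> bool) \<Rightarrow> ('v \<Rightarrow> gedge list) \<Rightarrow> bool" where
  "EPG_rep V E P \<longleftrightarrow> (\<forall>v\<in>V. grid_path (P v)) \<and>
     (\<forall>u\<in>V. \<forall>v\<in>V. u \<noteq> v \<longrightarrow> (E u v \<longleftrightarrow> edge_intersect (P u) (P v)))"

definition Bk_EPG_rep :: "nat \<Rightarrow> 'v set \<Rightarrow> ('v \<Rightarrow> 'v \<Rightarrow> bool) \<Rightarrow> ('v \<Rightarrow> gedge list) \<Rightarrow> bool" where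
  "Bk_EPG_rep k V E P \<longleftrightarrow> EPG_rep V E P \<and> (\<forall>v\<in>V. num_bends (P v) \<le> k)"

end

theory Submission
  imports Defs
begin

text \<open>Let \<open>i\<close> be the largest position of \<open>P\<^sub>1\<close> whose edge \<open>e\<close> also lies on \<open>P\<^sub>2\<close>.
  If \<open>e\<close> is relevant for neither path, it is an inner non-bend edge of both, so its
  predecessor and successor on either path are the two grid edges continuing \<open>e\<close> straight
  on. A grid edge has only two such straight neighbours, hence the successor of \<open>e\<close> on
  \<open>P\<^sub>1\<close> is also an edge of \<open>P\<^sub>2\<close>, contradicting the maximality of \<open>i\<close>.\<close>

definition straight_neighbours :: "gedge \<Rightarrow> gedge set" where
  "straight_neighbours e =
     {f. grid_edge f \<and> horizontal f = horizontal e \<and> card (e \<inter> f) = 1}"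

lemma card_grid_edge: "grid_edge e \<Longrightarrow> card e = 2"
  unfolding grid_edge_def by auto

lemma straight_neighbour_meets:
  assumes "grid_edge e" "f \<in> straight_neighbours e"
  shows "e \<inter> f \<noteq> {}" "f \<noteq> e"
  using assms card_grid_edge[of e] by (auto simp: straight_neighbours_def)

lemma straight_neighbours_horizontal:
  assumes e: "e = {(a, b), (a + 1, b)}"
  shows "straight_neighbours e \<subseteq> {{(a - 1, b), (a, b)}, {(a + 1, b), (a + 2, b)}}"
proof
  fix f assume f: "f \<in> straight_neighbours e"
  have "horizontal e" using e horizontal_def by blast
  with f obtain c d where "f = {(c, d), (c + 1, d)}"
    unfolding straight_neighbours_def horizontal_def by auto
  moreover have "grid_edge e" using e grid_edge_def by blast
  then have "e \<inter> f \<noteq> {}" "f \<noteq> e" using straight_neighbour_meets f by blast+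
  ultimately show "f \<in> {{(a - 1, b), (a, b)}, {(a + 1, b), (a + 2, b)}}"
    using e by (auto simp: doubleton_eq_iff)
qed

lemma straight_neighbours_vertical:
  assumes e: "e = {(a, b), (a, b + 1)}"
  shows "straight_neighbours e \<subseteq> {{(a, b - 1), (a, b)}, {(a, b + 1), (a, b + 2)}}"
proof
  fix f assume f: "f \<in> straight_neighbours e"
  have "\<not> horizontal e" using e by (auto simp: horizontal_def doubleton_eq_iff)
  with f have "grid_edge f" "\<not> horizontal f" by (auto simp: straight_neighbours_def)
  then obtain c d where "f = {(c, d), (c, d + 1)}"
    unfolding grid_edge_def horizontal_def by metis
  moreover have "grid_edge e" using e grid_edge_def by blast
  then have "e \<inter> f \<noteq> {}" "f \<noteq> e" using straight_neighbour_meets f by blast+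
  ultimately show "f \<in> {{(a, b - 1), (a, b)}, {(a, b + 1), (a, b + 2)}}"
    using e by (auto simp: doubleton_eq_iff)
qed

lemma straight_neighbours_subset_doubleton:
  assumes "grid_edge e"
  obtains x y where "straight_neighbours e \<subseteq> {x, y}"
proof -
  from assms obtain a b where "e = {(a, b), (a + 1, b)} \<or> e = {(a, b), (a, b + 1)}"
    unfolding grid_edge_def by blast
  then show thesis
    using that straight_neighbours_horizontal straight_neighbours_vertical by metis
qed

lemma inner_edge_if_not_relevant:
  assumes Q: "grid_path Q" and i: "i < length Q" and nr: "Q ! i \<notin> relevant_edges Q"
  shows "0 < i" "Suc i < length Q"
    "Q ! (i - 1) \<in> straight_neighbours (Q ! i)" "Q ! Suc i \<in> straight_neighbours (Q ! i)"
    "Q ! (i - 1) \<noteq> Q ! Suc i"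
proof -
  have "Q \<noteq> []" "distinct Q" and edges: "\<forall>e\<in>set Q. grid_edge e"
    and consecutive: "\<forall>i. Suc i < length Q \<longrightarrow> card (Q ! i \<inter> Q ! Suc i) = 1"
    using Q grid_path_def by auto
  show "0 < i"
    using nr \<open>Q \<noteq> []\<close> by (cases i) (auto simp: relevant_edges_def extremity_edges_def hd_conv_nth)
  then have pred: "Suc (i - 1) = i" by simp
  show "Suc i < length Q"
  proof (rule ccontr)
    assume "\<not> Suc i < length Q"
    then have "i = length Q - 1" using i by simp
    then show False
      using nr \<open>Q \<noteq> []\<close> by (auto simp: relevant_edges_def extremity_edges_def last_conv_nth)
  qed
  have "Q ! i \<notin> bend_edges Q" using nr by (simp add: relevant_edges_def)
  then have "\<not> bend_at Q (i - 1)" "\<not> bend_at Q i"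
    unfolding bend_edges_def by (metis (mono_tags, lifting) UnCI mem_Collect_eq pred)+
  then have "horizontal (Q ! (i - 1)) = horizontal (Q ! i)"
    "horizontal (Q ! Suc i) = horizontal (Q ! i)"
    using pred \<open>Suc i < length Q\<close> unfolding bend_at_def by auto
  moreover have "card (Q ! (i - 1) \<inter> Q ! i) = 1" "card (Q ! i \<inter> Q ! Suc i) = 1"
    using consecutive pred \<open>Suc i < length Q\<close> by (metis Suc_lessD)+
  moreover have "grid_edge (Q ! (i - 1))" "grid_edge (Q ! Suc i)"
    using edges i \<open>Suc i < length Q\<close> by auto
  ultimately show "Q ! (i - 1) \<in> straight_neighbours (Q ! i)"
    "Q ! Suc i \<in> straight_neighbours (Q ! i)"
    unfolding straight_neighbours_def by (simp_all add: Int_commute)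
  show "Q ! (i - 1) \<noteq> Q ! Suc i"
    using \<open>distinct Q\<close> \<open>Suc i < length Q\<close> by (simp add: nth_eq_iff_index_eq)
qed

lemma grid_paths_share_relevant_edge:
  assumes P1: "grid_path P1" and P2: "grid_path P2" and "edge_intersect P1 P2"
  shows "\<exists>e \<in> set P1 \<inter> set P2. e \<in> relevant_edges P1 \<or> e \<in> relevant_edges P2"
proof (rule ccontr)
  assume none: "\<not> ?thesis"
  define S where "S = {i. i < length P1 \<and> P1 ! i \<in> set P2}"
  have "finite S" "S \<noteq> {}"
    using \<open>edge_intersect P1 P2\<close> by (auto simp: S_def edge_intersect_def in_set_conv_nth)
  define i where "i = Max S"
  have "i \<in> S" using \<open>finite S\<close> \<open>S \<noteq> {}\<close> i_def by simp
  then have i: "i < length P1" and "P1 ! i \<in> set P2" unfolding S_def by auto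
  then obtain j where j: "j < length P2" and ji: "P2 ! j = P1 ! i"
    by (auto simp: in_set_conv_nth)
  have "P1 ! i \<notin> relevant_edges P1" "P2 ! j \<notin> relevant_edges P2"
    using none i j ji \<open>P1 ! i \<in> set P2\<close> by (metis IntI nth_mem)+
  note inner1 = inner_edge_if_not_relevant[OF P1 i this(1)]
    and inner2 = inner_edge_if_not_relevant[OF P2 j this(2)]
  have "grid_edge (P1 ! i)" using P1 i grid_path_def by auto
  then obtain x y where "straight_neighbours (P1 ! i) \<subseteq> {x, y}"
    by (rule straight_neighbours_subset_doubleton)
  then have "P1 ! Suc i \<in> {P2 ! (j - 1), P2 ! Suc j}"
    using inner1(3-5) inner2(3-5) ji by auto
  then have "P1 ! Suc i \<in> set P2" using inner2(1,2) by auto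
  then have "Suc i \<in> S" using inner1(2) by (simp add: S_def)
  then have "Suc i \<le> i" using \<open>finite S\<close> i_def by simp
  then show False by simp
qed

theorem lemma3p2:
  fixes V :: "'v set" and E :: "'v \<Rightarrow> 'v \<Rightarrow> bool" and P :: "'v \<Rightarrow> gedge list" and k :: nat
  assumes "simple_graph V E" and "Bk_EPG_rep k V E P"
    and "P1 \<in> P ` V" and "P2 \<in> P ` V"
  shows "edge_intersect P1 P2 \<longleftrightarrow>
           (\<exists>e \<in> set P1 \<inter> set P2. e \<in> relevant_edges P1 \<or> e \<in> relevant_edges P2)"
proof -
  have "grid_path P1" "grid_path P2"
    using assms(2-4) unfolding Bk_EPG_rep_def EPG_rep_def by auto
  then show ?thesis
    using grid_paths_share_relevant_edge unfolding edge_intersect_def by blast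
qed

end
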